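(* Suppose that there exist a continuously differentiable, uniformly bounded, uniformly coercive, and positive-definite operator $P(t)\in \mathscr{L}(X)$ defined for any $t\in\mathbb{R}_{\geq0}$, nonnegative and locally integrable functions $a_1(t), a_2(t)$ defined over $[0,+\infty)$ and satisfying \begin{align*} \lim_{t\rightarrow +\infty}\int_0^t a_1(\tau)\,{\rm d}\tau=+\infty\quad \text{and}\quad a_2(t)\leq M a_1(t) \end{align*} with a constant $M\geq 0$, constants $m_1,m_2>2$, and a function $\zeta \in\mathcal{K}$, such that \begin{align*} \langle ( A^*(t)P(t)+P(t)A(t)+\dot{P}(t))x , x\rangle+2\langle F(t, x, u), P(t)x \rangle \leq -a_1(t)\|x\|^2_{X}+ a_2(t) \left(\|x\|^{m_1}_X +\|x\|^{m_2}_X \right)+ \zeta(\|u\|_{U}), \quad \forall x\in D(A),\ u\in U,\ t\in\mathbb{R}_{\geq 0}. \end{align*} Then $V(t,x):=\langle P(t)x, x \rangle$ is an LiISS Lyapunov functional (LiISS-LF), and therefore the system $\dot x(t)=A(t)x(t)+F(t,x(t),u(t))$, $x(0)=x_0$ is LiISS. In particular, if $a_2\equiv 0$ on $[0,+\infty)$, then $V(t,x):=\langle P(t)x, x \rangle$ is an iISS Lyapunov functional (iISS-LF), and hence the system is iISS.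
   Context: $X$ is a Hilbert space with inner product $\langle\cdot,\cdot\rangle$ and norm $\|\cdot\|_X=\sqrt{\langle\cdot,\cdot\rangle}$, $U\subset X$ is a normed linear space with norm $\|\cdot\|_U$, and $\mathscr{L}(X)$ denotes the space of bounded linear operators on $X$. Consider the non-autonomous system $\dot{x}(t)=A(t)x(t)+F(t,x(t),u(t))$, $t\geq 0$, $x(0)=x_0$, where for each $t\geq0$ the linear operator $A(t):D(A(t))\subset X\to X$ generates an analytic semigroup on $X$ (with adjoint $A^*(t)$), $X_\alpha$ ($\alpha\in[0,1)$) is the fractional power space of $-A(t)$ with norm $\|(-A(t))^\alpha x\|_X$, $F:\mathbb{R}_{>0}\times X_\alpha\times U\to X$, $x_0\in D(A(0))$, and inputs $u\in C(\mathbb{R}_{\geq0},U)$; solutions are classical solutions. $\mathcal{K}$ is the class of continuous, strictly increasing functions $\gamma:\mathbb{R}_{\ge0}\to\mathbb{R}_{\ge0}$ with $\gamma(0)=0$; $\mathcal{K}_\infty$ the unbounded ones; $\mathcal{KL}$ the usual class. The system is LiISS if there exist $R>0$, $\gamma_0,\gamma\in\mathcal{K}$, $\sigma_0,\sigma\in\mathcal{K}_\infty$, $\beta\in\mathcal{KL}$ such that $\|x(t,x_0,u)\|_X\le\beta(\|x_0\|_X,t)+\sigma(\int_0^t\gamma(\|u(s)\|_U)ds)$ for all $t\ge0$ whenever $x_0\in D(A(0))$, $u\in C(\mathbb{R}_{\ge0},U)$ satisfy $\|x_0\|_X+\sigma_0(\int_0^t\gamma_0(\|u(s)\|_U)ds)\le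 R$ for all $t>0$; it is iISS if this estimate holds for all such $(x_0,u)$. A continuously differentiable $V:\mathbb{R}_{\ge0}\times X\to\mathbb{R}_{\ge0}$ is an LiISS-LF if (i) $\alpha_1(\|x\|_X)\le V(t,x)\le\alpha_2(\|x\|_X)$ for some $\alpha_1,\alpha_2\in\mathcal{K}_\infty$, and (ii) there exist nonnegative locally integrable $g_1,g_2$ with $\int_0^t g_1\to+\infty$ and $g_2\le g_1$, $\theta_1,\theta_2\in\mathcal{K}$ with $\theta_2(s)\le\theta_1(s)$ on some $[0,R']$, $R'>0$, and $\phi\in\mathcal{K}$ such that along trajectories $\dot V(t,x)\le -g_1(t)\theta_1(\|x\|_X)+g_2(t)\theta_2(\|x\|_X)+\phi(\|u(t)\|_U)$; it is an iISS-LF if additionally $g_2\equiv0$. *)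

theory Defs
  imports "HOL-Analysis.Analysis"
begin

definition class_K :: "(real \<Rightarrow> real) \<Rightarrow> bool" where
  "class_K \<gamma> \<longleftrightarrow> continuous_on {0..} \<gamma> \<and> strict_mono_on {0..} \<gamma> \<and> \<gamma> 0 = 0"

definition class_Kinf :: "(real \<Rightarrow> real) \<Rightarrow> bool" where
  "class_Kinf \<gamma> \<longleftrightarrow> class_K \<gamma> \<and> filterlim \<gamma> at_top at_top"

definition class_KL :: "(real \<Rightarrow> real \<Rightarrow> real) \<Rightarrow> bool" where
  "class_KL \<beta> \<longleftrightarrow> continuous_on ({0..} \<times> {0..}) (\<lambda>(r, t). \<beta> r t)
     \<and> (\<forall>t\<ge>0. class_K (\<lambda>r. \<beta> r t))
     \<and> (\<forall>r\<ge>0. antimono_on {0..} (\<beta> r) \<and> ((\<beta> r) \<longlongrightarrow> 0) at_top)"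

definition C0_semigroup :: "(real \<Rightarrow> 'x::real_normed_vector \<Rightarrow>\<^sub>L 'x) \<Rightarrow> bool" where
  "C0_semigroup T \<longleftrightarrow> T 0 = id_blinfun
     \<and> (\<forall>s\<ge>0. \<forall>t\<ge>0. T (s + t) = T s o\<^sub>L T t)
     \<and> (\<forall>x. ((\<lambda>t. T t x) \<longlongrightarrow> x) (at_right 0))"

definition is_generator :: "(real \<Rightarrow> 'x::real_normed_vector \<Rightarrow>\<^sub>L 'x) \<Rightarrow> ('x \<Rightarrow> 'x) \<Rightarrow> 'x set \<Rightarrow> bool" where
  "is_generator T A D \<longleftrightarrow>
     D = {x. \<exists>y. ((\<lambda>h. (T h x - x) /\<^sub>R h) \<longlongrightarrow> y) (at_right 0)}
     \<and> (\<forall>x\<in>D. ((\<lambda>h. (T h x - x) /\<^sub>R h) \<longlongrightarrow> A x) (at_right 0))"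

text \<open>Analytic semigroup, via the standard real-variable characterisation:
  T(t) maps X into D(A) for t > 0 and sup over 0 < t <= 1 of t * norm (A T(t)) is finite.\<close>
definition generates_analytic_semigroup :: "('x::real_normed_vector \<Rightarrow> 'x) \<Rightarrow> 'x set \<Rightarrow> bool" where
  "generates_analytic_semigroup A D \<longleftrightarrow>
     (\<exists>T. C0_semigroup T \<and> is_generator T A D
        \<and> (\<forall>t>0. \<forall>x. blinfun_apply (T t) x \<in> D)
        \<and> (\<exists>C. \<forall>t\<in>{0<..1}. \<forall>x. norm (A (T t x)) \<le> C / t * norm x))"

definition classical_solution ::
  "(real \<Rightarrow> 'x::real_normed_vector \<Rightarrow> 'x) \<Rightarrow> (real \<Rightarrow> 'x set) \<Rightarrow> (real \<Rightarrow> 'x \<Rightarrow> 'u \<Rightarrow> 'x)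
   \<Rightarrow> (real \<Rightarrow> 'u) \<Rightarrow> 'x \<Rightarrow> (real \<Rightarrow> 'x) \<Rightarrow> bool" where
  "classical_solution A D F u x0 x \<longleftrightarrow>
     x 0 = x0 \<and> continuous_on {0..} x
     \<and> (\<forall>t>0. x t \<in> D t \<and> (x has_vector_derivative (A t (x t) + F t (x t) (u t))) (at t))
     \<and> continuous_on {0<..} (\<lambda>t. A t (x t) + F t (x t) (u t))"

definition LiISS ::
  "(real \<Rightarrow> 'x::real_normed_vector \<Rightarrow> 'x) \<Rightarrow> (real \<Rightarrow> 'x set) \<Rightarrow> (real \<Rightarrow> 'x \<Rightarrow> 'u::real_normed_vector \<Rightarrow> 'x) \<Rightarrow> bool" where
  "LiISS A D F \<longleftrightarrow>
     (\<exists>R \<gamma>0 \<gamma> \<sigma>0 \<sigma> \<beta>. R > 0 \<and> class_K \<gamma>0 \<and> class_K \<gamma> \<and> class_Kinf \<sigma>0 \<and> class_Kinf \<sigma> \<and> class_KL \<beta> \<and>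
       (\<forall>x0 u x. x0 \<in> D 0 \<longrightarrow> continuous_on {0..} u \<longrightarrow> classical_solution A D F u x0 x \<longrightarrow>
          (\<forall>t>0. norm x0 + \<sigma>0 (integral {0..t} (\<lambda>s. \<gamma>0 (norm (u s)))) \<le> R) \<longrightarrow>
          (\<forall>t\<ge>0. norm (x t) \<le> \<beta> (norm x0) t + \<sigma> (integral {0..t} (\<lambda>s. \<gamma> (norm (u s)))))))"

definition iISS ::
  "(real \<Rightarrow> 'x::real_normed_vector \<Rightarrow> 'x) \<Rightarrow> (real \<Rightarrow> 'x set) \<Rightarrow> (real \<Rightarrow> 'x \<Rightarrow> 'u::real_normed_vector \<Rightarrow> 'x) \<Rightarrow> bool" where
  "iISS A D F \<longleftrightarrow>
     (\<exists>\<gamma> \<sigma> \<beta>. class_K \<gamma> \<and> class_Kinf \<sigma> \<and> class_KL \<beta> \<and>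
       (\<forall>x0 u x. x0 \<in> D 0 \<longrightarrow> continuous_on {0..} u \<longrightarrow> classical_solution A D F u x0 x \<longrightarrow>
          (\<forall>t\<ge>0. norm (x t) \<le> \<beta> (norm x0) t + \<sigma> (integral {0..t} (\<lambda>s. \<gamma> (norm (u s)))))))"

definition C1_nonneg_functional :: "(real \<Rightarrow> 'x::real_normed_vector \<Rightarrow> real) \<Rightarrow> bool" where
  "C1_nonneg_functional V \<longleftrightarrow>
     (\<forall>t\<ge>0. \<forall>x. V t x \<ge> 0) \<and>
     (\<exists>V'. (\<forall>p\<in>{0..} \<times> UNIV. ((\<lambda>(t, x). V t x) has_derivative blinfun_apply (V' p)) (at p within ({0..} \<times> UNIV)))
         \<and> continuous_on ({0..} \<times> UNIV) V')"

definition locally_integrable_nonneg :: "(real \<Rightarrow> real) \<Rightarrow> bool" where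
  "locally_integrable_nonneg g \<longleftrightarrow> (\<forall>t\<ge>0. g t \<ge> 0) \<and> (\<forall>b\<ge>0. g integrable_on {0..b})"

definition LF_decay ::
  "(real \<Rightarrow> 'x::real_normed_vector \<Rightarrow> 'x) \<Rightarrow> (real \<Rightarrow> 'x set) \<Rightarrow> (real \<Rightarrow> 'x \<Rightarrow> 'u::real_normed_vector \<Rightarrow> 'x)
   \<Rightarrow> (real \<Rightarrow> 'x \<Rightarrow> real) \<Rightarrow> (real \<Rightarrow> real) \<Rightarrow> (real \<Rightarrow> real) \<Rightarrow> (real \<Rightarrow> real) \<Rightarrow> (real \<Rightarrow> real)
   \<Rightarrow> (real \<Rightarrow> real) \<Rightarrow> bool" where
  "LF_decay A D F V g1 g2 \<theta>1 \<theta>2 \<phi> \<longleftrightarrow>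
     locally_integrable_nonneg g1 \<and> locally_integrable_nonneg g2 \<and>
     filterlim (\<lambda>t. integral {0..t} g1) at_top at_top \<and> (\<forall>t\<ge>0. g2 t \<le> g1 t) \<and>
     class_K \<theta>1 \<and> class_K \<theta>2 \<and> (\<exists>R'>0. \<forall>s\<in>{0..R'}. \<theta>2 s \<le> \<theta>1 s) \<and> class_K \<phi> \<and>
     (\<forall>x0 u x. x0 \<in> D 0 \<longrightarrow> continuous_on {0..} u \<longrightarrow> classical_solution A D F u x0 x \<longrightarrow>
        (\<forall>t>0. \<exists>d. ((\<lambda>s. V s (x s)) has_real_derivative d) (at t) \<and>
            d \<le> - g1 t * \<theta>1 (norm (x t)) + g2 t * \<theta>2 (norm (x t)) + \<phi> (norm (u t))))"

definition LiISS_LF ::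
  "(real \<Rightarrow> 'x::real_normed_vector \<Rightarrow> 'x) \<Rightarrow> (real \<Rightarrow> 'x set) \<Rightarrow> (real \<Rightarrow> 'x \<Rightarrow> 'u::real_normed_vector \<Rightarrow> 'x)
   \<Rightarrow> (real \<Rightarrow> 'x \<Rightarrow> real) \<Rightarrow> bool" where
  "LiISS_LF A D F V \<longleftrightarrow> C1_nonneg_functional V \<and>
     (\<exists>\<alpha>1 \<alpha>2. class_Kinf \<alpha>1 \<and> class_Kinf \<alpha>2 \<and> (\<forall>t\<ge>0. \<forall>x. \<alpha>1 (norm x) \<le> V t x \<and> V t x \<le> \<alpha>2 (norm x))) \<and>
     (\<exists>g1 g2 \<theta>1 \<theta>2 \<phi>. LF_decay A D F V g1 g2 \<theta>1 \<theta>2 \<phi>)"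

definition iISS_LF ::
  "(real \<Rightarrow> 'x::real_normed_vector \<Rightarrow> 'x) \<Rightarrow> (real \<Rightarrow> 'x set) \<Rightarrow> (real \<Rightarrow> 'x \<Rightarrow> 'u::real_normed_vector \<Rightarrow> 'x)
   \<Rightarrow> (real \<Rightarrow> 'x \<Rightarrow> real) \<Rightarrow> bool" where
  "iISS_LF A D F V \<longleftrightarrow> C1_nonneg_functional V \<and>
     (\<exists>\<alpha>1 \<alpha>2. class_Kinf \<alpha>1 \<and> class_Kinf \<alpha>2 \<and> (\<forall>t\<ge>0. \<forall>x. \<alpha>1 (norm x) \<le> V t x \<and> V t x \<le> \<alpha>2 (norm x))) \<and>
     (\<exists>g1 \<theta>1 \<theta>2 \<phi>. LF_decay A D F V g1 (\<lambda>_. 0) \<theta>1 \<theta>2 \<phi>)"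

definition positive_definite_op :: "('x::real_inner \<Rightarrow>\<^sub>L 'x) \<Rightarrow> bool" where
  "positive_definite_op Q \<longleftrightarrow> (\<forall>x y. inner (Q x) y = inner x (Q y)) \<and> (\<forall>x. x \<noteq> 0 \<longrightarrow> inner (Q x) x > 0)"

end

theory Submission
  imports Defs
begin

text \<open>Along a classical solution, the derivative of \<open>V t x = \<langle>P t x, x\<rangle>\<close> is exactly the
  left-hand side of the hypothesis, so
  \<open>V' \<le> -a1 \<parallel>x\<parallel>\<^sup>2 + a2 (\<parallel>x\<parallel>\<^bsup>m1\<^esup> + \<parallel>x\<parallel>\<^bsup>m2\<^esup>) + \<zeta> \<parallel>u\<parallel>\<close>.
  Since \<open>m1, m2 > 2\<close> and \<open>a2 \<le> M a1\<close>, in a small ball (everywhere if \<open>a2 = 0\<close>) the \<open>a2\<close>-term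
  absorbs at most half of \<open>a1 \<parallel>x\<parallel>\<^sup>2\<close>, and \<open>V \<le> C \<parallel>x\<parallel>\<^sup>2\<close> gives \<open>V' \<le> -(a1 / 2C) V + \<zeta> \<parallel>u\<parallel>\<close>.
  A comparison argument yields \<open>V t \<le> V 0 / (1 + \<integral>a1 / 2C) + \<integral>\<zeta> \<parallel>u\<parallel>\<close>, which the lower
  bound \<open>c \<parallel>x\<parallel>\<^sup>2 \<le> V\<close> turns into the iISS estimate. For LiISS, a first-exit-time argument shows
  that small initial states and small input energy keep the solution inside the ball.\<close>

lemma class_K_nonneg:
  assumes "class_K \<gamma>" and "s \<ge> 0"
  shows "\<gamma> s \<ge> 0"
proof (cases "s = 0")
  case False
  with assms have "\<gamma> 0 < \<gamma> s"
    unfolding class_K_def by (intro strict_mono_onD[of "{0..}" \<gamma>]) auto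
  with assms show ?thesis unfolding class_K_def by simp
qed (use assms in \<open>simp add: class_K_def\<close>)

lemma class_Kinf_scaled_square:
  assumes "c > 0"
  shows "class_Kinf (\<lambda>s. c * s\<^sup>2)"
  unfolding class_Kinf_def class_K_def
proof (intro conjI)
  show "strict_mono_on {0..} (\<lambda>s::real. c * s\<^sup>2)"
    unfolding strict_mono_on_def using assms by (auto intro!: power_strict_mono)
  show "filterlim (\<lambda>s::real. c * s\<^sup>2) at_top at_top"
    by (rule filterlim_tendsto_pos_mult_at_top[OF tendsto_const assms])
       (simp add: filterlim_pow_at_top filterlim_ident)
qed (auto intro!: continuous_intros)

lemma class_K_square: "class_K (\<lambda>s. s\<^sup>2)"
  using class_Kinf_scaled_square[of 1] unfolding class_Kinf_def by simp

lemma class_Kinf_ident: "class_Kinf (\<lambda>s. s)"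
  unfolding class_Kinf_def class_K_def strict_mono_on_def
  by (auto intro: continuous_intros filterlim_ident)

lemma class_Kinf_sqrt_divide:
  assumes "c > 0"
  shows "class_Kinf (\<lambda>s. sqrt (s / c))"
  unfolding class_Kinf_def class_K_def
proof (intro conjI)
  show "continuous_on {0..} (\<lambda>s::real. sqrt (s / c))"
    using assms by (intro continuous_intros) auto
  show "strict_mono_on {0..} (\<lambda>s::real. sqrt (s / c))"
    unfolding strict_mono_on_def using assms by (auto simp: divide_strict_right_mono)
  have "filterlim (\<lambda>s. inverse c * s) at_top at_top"
    using assms
    by (intro filterlim_tendsto_pos_mult_at_top[OF tendsto_const _ filterlim_ident]) auto
  then show "filterlim (\<lambda>s::real. sqrt (s / c)) at_top at_top"
    by (intro filterlim_compose[OF sqrt_at_top]) (simp add: field_simps)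
qed simp

lemma class_K_powr_add:
  assumes "m1 > 0" and "m2 > 0"
  shows "class_K (\<lambda>s. s powr m1 + s powr m2)"
  unfolding class_K_def strict_mono_on_def using assms
  by (auto intro!: continuous_intros continuous_on_powr' add_strict_mono powr_less_mono2)

lemma class_KL_divide_sqrt:
  fixes I :: "real \<Rightarrow> real"
  assumes "K > 0" and "continuous_on {0..} I" and "\<And>t. I t \<ge> 0" and "mono I"
    and "filterlim I at_top at_top"
  shows "class_KL (\<lambda>r t. K * r / sqrt (1 + I t))"
  unfolding class_KL_def
proof (intro conjI allI impI)
  have pos: "sqrt (1 + I t) > 0" for t
    using assms(3)[of t] by (simp add: add_pos_nonneg)
  have "continuous_on ({0..} \<times> {0..}) (\<lambda>p. I (snd p))"
    by (rule continuous_on_compose2[OF assms(2)]) (auto intro: continuous_intros)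
  then have "continuous_on ({0..} \<times> {0..}) (\<lambda>p. K * fst p / sqrt (1 + I (snd p)))"
    using pos by (intro continuous_intros) (auto simp: less_imp_neq[symmetric])
  then show "continuous_on ({0..} \<times> {0..}) (\<lambda>(r, t). K * r / sqrt (1 + I t))"
    by (simp add: case_prod_beta)
  show "class_K (\<lambda>r. K * r / sqrt (1 + I t))" for t
    unfolding class_K_def strict_mono_on_def using pos[of t] assms(1)
    by (auto intro!: continuous_intros divide_strict_right_mono)
  show "antimono_on {0..} (\<lambda>t. K * r / sqrt (1 + I t))" if "r \<ge> 0" for r
    unfolding monotone_on_def using pos assms(1) that monoD[OF assms(4)]
    by (auto intro!: divide_left_mono)
  have "filterlim (\<lambda>t. sqrt (1 + I t)) at_top at_top"
    by (intro filterlim_compose[OF sqrt_at_top] filterlim_tendsto_add_at_top[OF tendsto_const]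
        assms(5))
  then have "((\<lambda>t. K * r * inverse (sqrt (1 + I t))) \<longlongrightarrow> K * r * 0) at_top" for r
    by (intro tendsto_mult tendsto_const tendsto_inverse_0_at_top)
  then show "((\<lambda>t. K * r / sqrt (1 + I t)) \<longlongrightarrow> 0) at_top" for r
    by (simp add: divide_inverse)
qed

lemma locally_integrable_nonneg_integral_nonneg:
  assumes "locally_integrable_nonneg a"
  shows "integral {0..t} a \<ge> 0"
  using assms unfolding locally_integrable_nonneg_def
  by (cases "t \<ge> 0") (auto intro: integral_nonneg)

lemma locally_integrable_nonneg_integral_mono:
  assumes "locally_integrable_nonneg a"
  shows "mono (\<lambda>t. integral {0..t} a)"
proof (rule monoI)
  fix s t :: real assume "s \<le> t"
  show "integral {0..s} a \<le> integral {0..t} a"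
  proof (cases "s \<ge> 0")
    case True
    with \<open>s \<le> t\<close> assms show ?thesis
      unfolding locally_integrable_nonneg_def by (auto intro!: integral_subset_le)
  qed (use assms locally_integrable_nonneg_integral_nonneg in auto)
qed

lemma locally_integrable_nonneg_integral_continuous:
  assumes "locally_integrable_nonneg a"
  shows "continuous_on {0..} (\<lambda>t. integral {0..t} a)"
proof (rule continuous_on_eq_continuous_within[THEN iffD2], intro ballI)
  fix t :: real assume t: "t \<in> {0..}"
  have "continuous_on {0..t+1} (\<lambda>t. integral {0..t} a)"
    using assms t unfolding locally_integrable_nonneg_def
    by (intro indefinite_integral_continuous_1) auto
  moreover have "at t within {0..} = at t within {0..t+1}"
    by (rule at_within_nhd[of t "{..<t+1}"]) auto
  ultimately show "continuous (at t within {0..}) (\<lambda>t. integral {0..t} a)"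
    using t by (simp add: continuous_on_eq_continuous_within continuous_within)
qed

lemma locally_integrable_nonneg_continuous:
  assumes "continuous_on {0..} f" and "\<And>t. t \<ge> 0 \<Longrightarrow> f t \<ge> 0"
  shows "locally_integrable_nonneg f"
proof -
  have "f integrable_on {0..b}" for b
    by (rule integrable_continuous_interval, rule continuous_on_subset[OF assms(1)]) auto
  with assms(2) show ?thesis
    unfolding locally_integrable_nonneg_def by blast
qed

lemma integral_has_real_derivative_at:
  assumes "continuous_on {0..} f" and "t > 0"
  shows "((\<lambda>s. integral {0..s} f) has_real_derivative f t) (at t)"
proof -
  have "((\<lambda>s. integral {0..s} f) has_real_derivative f t) (at t within {0..t+1})"
    using assms by (intro integral_has_real_derivative) (auto elim: continuous_on_subset)
  then show ?thesis
    using assms(2) by (subst (asm) at_within_interior) auto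
qed

lemma powr_le_square_near_0:
  fixes m \<delta> :: real
  assumes "m > 2" and "\<delta> > 0"
  obtains r where "r > 0" and "\<And>s. 0 \<le> s \<Longrightarrow> s \<le> r \<Longrightarrow> s powr m \<le> \<delta> * s\<^sup>2"
proof
  define r where "r = \<delta> powr (1 / (m - 2))"
  show "r > 0" using assms by (simp add: r_def)
  fix s :: real assume s: "0 \<le> s" "s \<le> r"
  have "s powr m = s powr 2 * s powr (m - 2)"
    by (simp flip: powr_add)
  also have "\<dots> = s\<^sup>2 * s powr (m - 2)"
    using s by (cases "s = 0") (simp_all add: powr_numeral)
  also have "\<dots> \<le> s\<^sup>2 * r powr (m - 2)"
    using s assms by (intro mult_left_mono powr_mono2) auto
  also have "\<dots> = \<delta> * s\<^sup>2"
    using assms by (simp add: r_def powr_powr)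
  finally show "s powr m \<le> \<delta> * s\<^sup>2" .
qed

lemma powr_add_le_square_near_0:
  fixes m1 m2 \<epsilon> :: real
  assumes "m1 > 2" and "m2 > 2" and "\<epsilon> > 0"
  obtains r where "r > 0" and "\<And>s. 0 \<le> s \<Longrightarrow> s \<le> r \<Longrightarrow> s powr m1 + s powr m2 \<le> \<epsilon> * s\<^sup>2"
proof -
  obtain r1 where "r1 > 0" and r1: "\<And>s. 0 \<le> s \<Longrightarrow> s \<le> r1 \<Longrightarrow> s powr m1 \<le> \<epsilon> / 2 * s\<^sup>2"
    using powr_le_square_near_0[OF assms(1)] assms(3) by (metis half_gt_zero)
  obtain r2 where "r2 > 0" and r2: "\<And>s. 0 \<le> s \<Longrightarrow> s \<le> r2 \<Longrightarrow> s powr m2 \<le> \<epsilon> / 2 * s\<^sup>2"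
    using powr_le_square_near_0[OF assms(2)] assms(3) by (metis half_gt_zero)
  show thesis
  proof (rule that[of "min r1 r2"])
    fix s :: real assume "0 \<le> s" "s \<le> min r1 r2"
    then show "s powr m1 + s powr m2 \<le> \<epsilon> * s\<^sup>2"
      using r1[of s] r2[of s] by auto
  qed (use \<open>r1 > 0\<close> \<open>r2 > 0\<close> in auto)
qed

lemma continuous_stays_below:
  fixes f :: "real \<Rightarrow> real"
  assumes cont: "continuous_on {0..} f" and start: "f 0 < b"
    and step: "\<And>T. T > 0 \<Longrightarrow> (\<And>s. 0 < s \<Longrightarrow> s < T \<Longrightarrow> f s \<le> b) \<Longrightarrow> f T < b"
    and "t \<ge> 0"
  shows "f t < b"
proof (rule ccontr)
  assume "\<not> f t < b"
  define S where "S = {s \<in> {0..t}. b \<le> f s}"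
  define T where "T = Inf S"
  have "S \<noteq> {}" and "bdd_below S"
    using \<open>t \<ge> 0\<close> \<open>\<not> f t < b\<close> by (auto simp: S_def intro: bdd_belowI[of _ 0])
  moreover have "closed S"
    unfolding S_def using cont
    by (intro continuous_on_closed_Collect_le continuous_on_const) (auto elim: continuous_on_subset)
  ultimately have "T \<in> S"
    unfolding T_def by (rule closed_contains_Inf)
  then have "T \<ge> 0" and "b \<le> f T" and "T \<le> t"
    by (auto simp: S_def)
  moreover have "f s \<le> b" if "0 < s" "s < T" for s
  proof (rule ccontr)
    assume "\<not> f s \<le> b"
    with that \<open>T \<le> t\<close> have "s \<in> S" by (auto simp: S_def)
    then have "T \<le> s" unfolding T_def using \<open>bdd_below S\<close> by (rule cInf_lower)
    with that show False by simp
  qed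
  moreover have "T \<noteq> 0"
    using start \<open>b \<le> f T\<close> by auto
  ultimately show False
    using step[of T] by fastforce
qed

lemma diff_le_integral_of_derivative_le:
  fixes Z Z' g :: "real \<Rightarrow> real"
  assumes "t \<ge> 0" and "continuous_on {0..t} Z"
    and "\<And>s. s \<in> {0<..<t} \<Longrightarrow> (Z has_real_derivative Z' s) (at s)"
    and "\<And>s. s \<in> {0<..<t} \<Longrightarrow> Z' s \<le> g s" and "g integrable_on {0..t}"
  shows "Z t - Z 0 \<le> integral {0..t} g"
proof -
  define h where "h s = (if s \<in> {0<..<t} then Z' s else g s)" for s
  have "(h has_integral (Z t - Z 0)) {0..t}"
    using assms(1-3) unfolding h_def
    by (intro fundamental_theorem_of_calculus_interior)
      (auto simp: has_real_derivative_iff_has_vector_derivative[symmetric])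
  moreover have "h s \<le> g s" for s
    using assms(4) by (simp add: h_def)
  ultimately show ?thesis
    using assms(5) by (intro has_integral_le[OF _ integrable_integral]) auto
qed

text \<open>The function \<open>Z = V - w\<close> is nonincreasing, so \<open>V \<ge> max (Z t) 0\<close> on \<open>[0, t]\<close>; integrating
  \<open>Z' \<le> -a V \<le> -a max (Z t) 0\<close> over \<open>[0, t]\<close> gives \<open>Z t (1 + \<integral>a) \<le> Z 0\<close>.\<close>
lemma comparison_decay_bound:
  fixes V w w' a :: "real \<Rightarrow> real" and t :: real
  assumes "t \<ge> 0"
    and V_cont: "continuous_on {0..t} V" and V_nonneg: "\<And>s. s \<in> {0..t} \<Longrightarrow> V s \<ge> 0"
    and w_cont: "continuous_on {0..t} w" and "w 0 = 0"
    and w_nonneg: "\<And>s. s \<in> {0..t} \<Longrightarrow> w s \<ge> 0"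
    and w_deriv: "\<And>s. s \<in> {0<..<t} \<Longrightarrow> (w has_real_derivative w' s) (at s)"
    and V_deriv: "\<And>s. s \<in> {0<..<t} \<Longrightarrow>
        \<exists>d. (V has_real_derivative d) (at s) \<and> d \<le> - a s * V s + w' s"
    and a_nonneg: "\<And>s. s \<in> {0..t} \<Longrightarrow> a s \<ge> 0" and a_int: "a integrable_on {0..t}"
  shows "V t \<le> V 0 / (1 + integral {0..t} a) + w t"
proof -
  have "\<forall>s\<in>{0<..<t}. \<exists>d. (V has_real_derivative d) (at s) \<and> d \<le> - a s * V s + w' s"
    using V_deriv by blast
  then obtain V' where V': "\<And>s. s \<in> {0<..<t} \<Longrightarrow>
      (V has_real_derivative V' s) (at s) \<and> V' s \<le> - a s * V s + w' s"
    by (metis bchoice)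
  define Z where "Z s = V s - w s" for s
  define m where "m = max (Z t) 0"
  have Z_cont: "continuous_on {0..t} Z"
    unfolding Z_def using V_cont w_cont by (intro continuous_intros)
  have Z_deriv: "(Z has_real_derivative V' s - w' s) (at s)" if "s \<in> {0<..<t}" for s
    unfolding Z_def using V' w_deriv that by (auto intro!: derivative_eq_intros)
  have "Z t \<le> Z s" if s: "s \<in> {0..t}" for s
  proof (rule DERIV_nonpos_imp_decreasing_open[of s t Z])
    fix r assume "s < r" "r < t"
    with s have r: "r \<in> {0<..<t}" by simp
    then have "a r * V r \<ge> 0"
      using a_nonneg V_nonneg by simp
    with V'[OF r] Z_deriv[OF r] show "\<exists>y. (Z has_real_derivative y) (at r) \<and> y \<le> 0"
      by auto
  qed (use s Z_cont in \<open>auto elim: continuous_on_subset\<close>)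
  then have "m \<le> V s" if "s \<in> {0..t}" for s
    using that V_nonneg w_nonneg by (fastforce simp: m_def Z_def)
  then have "V' s - w' s \<le> - m * a s" if "s \<in> {0<..<t}" for s
    using V'[OF that] mult_left_mono[of m "V s" "a s"] a_nonneg[of s] that
    by (auto simp: mult.commute[of m])
  moreover have "(\<lambda>s. - m * a s) integrable_on {0..t}"
    using integrable_on_cmult_left[OF a_int, of "- m"] by simp
  ultimately have "Z t - Z 0 \<le> integral {0..t} (\<lambda>s. - m * a s)"
    by (intro diff_le_integral_of_derivative_le[OF \<open>t \<ge> 0\<close> Z_cont Z_deriv]) auto
  moreover have "integral {0..t} a \<ge> 0"
    using a_nonneg by (intro integral_nonneg[OF a_int]) auto
  moreover have "Z t * integral {0..t} a \<le> m * integral {0..t} a"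
    using calculation(2) by (intro mult_right_mono) (auto simp: m_def)
  ultimately have "Z t \<le> Z 0 / (1 + integral {0..t} a)"
    by (simp add: field_simps)
  then show ?thesis
    using \<open>w 0 = 0\<close> by (simp add: Z_def)
qed

lemma has_real_derivative_quadratic_form:
  fixes P :: "real \<Rightarrow> 'x::real_inner \<Rightarrow>\<^sub>L 'x" and x :: "real \<Rightarrow> 'x"
  assumes "(P has_vector_derivative P') (at t)" and "(x has_vector_derivative x') (at t)"
  shows "((\<lambda>s. inner (P s (x s)) (x s)) has_real_derivative
      inner (P t (x t)) x' + inner (P t x') (x t) + inner (P' (x t)) (x t)) (at t)"
proof -
  have "((\<lambda>s. P s (x s)) has_vector_derivative P t x' + P' (x t)) (at t)"
    using bounded_bilinear.has_vector_derivative[OF bounded_bilinear_blinfun_apply assms] by simp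
  from bounded_bilinear.has_vector_derivative[OF bounded_bilinear_inner this assms(2)] show ?thesis
    by (simp add: has_real_derivative_iff_has_vector_derivative inner_add_left algebra_simps)
qed

lemma has_derivative_quadratic_form:
  fixes P :: "real \<Rightarrow> 'x::real_inner \<Rightarrow>\<^sub>L 'x"
  assumes "(P has_vector_derivative P') (at t within T)"
  shows "((\<lambda>(s, y). inner (P s y) y) has_derivative
      (\<lambda>(h, k). inner (P t x) k + inner (P t k) x + h * inner (P' x) x))
      (at (t, x) within T \<times> UNIV)"
proof -
  let ?S = "T \<times> (UNIV :: 'x set)"
  have "(P has_derivative (\<lambda>h. h *\<^sub>R P')) (at (fst (t, x)) within fst ` ?S)"
    using assms unfolding has_vector_derivative_def by simp
  from diff_chain_within[OF has_derivative_fst[OF has_derivative_ident] this]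
  have P_fst: "((\<lambda>q. P (fst q)) has_derivative (\<lambda>h. fst h *\<^sub>R P')) (at (t, x) within ?S)"
    by (simp add: o_def)
  have "((\<lambda>q. P (fst q) (snd q)) has_derivative (\<lambda>h. P t (snd h) + (fst h *\<^sub>R P') x))
      (at (t, x) within ?S)"
    using bounded_bilinear.FDERIV[OF bounded_bilinear_blinfun_apply P_fst
        has_derivative_snd[OF has_derivative_ident]] by simp
  from bounded_bilinear.FDERIV[OF bounded_bilinear_inner this
      has_derivative_snd[OF has_derivative_ident]]
  show ?thesis
    by (simp add: case_prod_beta' inner_add_left blinfun.scaleR_left add.assoc)
qed

lemma C1_nonneg_functional_quadratic_form:
  fixes P P' :: "real \<Rightarrow> 'x::real_inner \<Rightarrow>\<^sub>L 'x"
  assumes P_deriv: "\<And>t. t \<ge> 0 \<Longrightarrow> (P has_vector_derivative P' t) (at t within {0..})"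
    and P'_cont: "continuous_on {0..} P'"
    and P_sym: "\<And>t y z. t \<ge> 0 \<Longrightarrow> inner (P t y) z = inner y (P t z)"
    and P_nonneg: "\<And>t y. t \<ge> 0 \<Longrightarrow> inner (P t y) y \<ge> 0"
  shows "C1_nonneg_functional (\<lambda>t x. inner (P t x) x)"
proof -
  define S where "S = ({0..} \<times> UNIV :: (real \<times> 'x) set)"
  define V' where "V' p = inner (P' (fst p) (snd p)) (snd p) *\<^sub>R fst_blinfun
      + (blinfun_inner_left (2 *\<^sub>R P (fst p) (snd p)) o\<^sub>L snd_blinfun)" for p :: "real \<times> 'x"
  have P_cont: "continuous_on {0..} P"
    using P_deriv by (intro continuous_on_vector_derivative) auto
  have "((\<lambda>(t, x). inner (P t x) x) has_derivative blinfun_apply (V' p)) (at p within S)"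
    if "p \<in> S" for p
  proof -
    obtain t x where p: "p = (t, x)" and "t \<ge> 0"
      using \<open>p \<in> S\<close> by (cases p) (auto simp: S_def)
    have "(\<lambda>(h, k). inner (P t x) k + inner (P t k) x + h * inner (P' t x) x)
        = blinfun_apply (V' p)"
      using P_sym[OF \<open>t \<ge> 0\<close>]
      by (auto simp: V'_def p fun_eq_iff inner_commute algebra_simps blinfun.add_left
          blinfun.scaleR_left)
    with has_derivative_quadratic_form[OF P_deriv[OF \<open>t \<ge> 0\<close>], of x] show ?thesis
      by (simp add: p S_def)
  qed
  moreover have "continuous_on S V'"
  proof -
    have "continuous_on S (\<lambda>p. P' (fst p))" "continuous_on S (\<lambda>p. P (fst p))"
      unfolding S_def
      by (auto intro!: continuous_on_compose2[OF P'_cont] continuous_on_compose2[OF P_cont]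
          continuous_intros)
    then show ?thesis
      unfolding V'_def by (intro continuous_intros)
  qed
  ultimately show ?thesis
    unfolding C1_nonneg_functional_def S_def using P_nonneg by blast
qed

lemma norm_le_of_quadratic_bounds:
  fixes c C q w n n0 v v0 :: real
  assumes c: "c > 0" and C: "C > 0" and q: "q \<ge> 1" and w: "w \<ge> 0" and n: "n \<ge> 0"
    and n0: "n0 \<ge> 0" and lower: "c * n\<^sup>2 \<le> v" and upper: "v \<le> v0 / q + w"
    and v0: "v0 \<le> C * n0\<^sup>2"
  shows "n \<le> sqrt (C / c) * n0 / sqrt q + sqrt (w / c)"
proof -
  have "v0 / q \<le> C * n0\<^sup>2 / q"
    using v0 q by (simp add: divide_right_mono)
  then have "c * n\<^sup>2 \<le> C * n0\<^sup>2 / q + w"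
    using lower upper by linarith
  then have "n\<^sup>2 \<le> (C / c) * n0\<^sup>2 / q + w / c"
    using c by (simp add: field_simps)
  then have "sqrt (n\<^sup>2) \<le> sqrt ((C / c) * n0\<^sup>2 / q + w / c)"
    by (rule real_sqrt_le_mono)
  also have "\<dots> \<le> sqrt ((C / c) * n0\<^sup>2 / q) + sqrt (w / c)"
    using c C q w by (intro sqrt_add_le_add_sqrt) auto
  also have "sqrt ((C / c) * n0\<^sup>2 / q) = sqrt (C / c) * n0 / sqrt q"
    using n0 by (simp add: real_sqrt_mult real_sqrt_divide)
  finally show ?thesis
    using n by simp
qed

text \<open>\<open>\<theta>\<close> stands for \<open>\<lambda>s. s powr m1 + s powr m2\<close>: the argument only uses that it is
  \<open>o(s\<^sup>2)\<close> at \<open>0\<close>, in the quantitative form \<open>\<theta>_near_0\<close>.\<close>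
locale quadratic_Lyapunov =
  fixes A :: "real \<Rightarrow> 'x::real_inner \<Rightarrow> 'x"
    and D :: "real \<Rightarrow> 'x set"
    and F :: "real \<Rightarrow> 'x \<Rightarrow> 'u::real_normed_vector \<Rightarrow> 'x"
    and P P' :: "real \<Rightarrow> 'x \<Rightarrow>\<^sub>L 'x"
    and a1 a2 \<zeta> \<theta> :: "real \<Rightarrow> real"
    and M c C r :: real
  assumes P_deriv: "\<And>t. t \<ge> 0 \<Longrightarrow> (P has_vector_derivative P' t) (at t within {0..})"
    and P'_cont: "continuous_on {0..} P'"
    and P_sym: "\<And>t y z. t \<ge> 0 \<Longrightarrow> inner (P t y) z = inner y (P t z)"
    and C_pos: "C > 0" and P_norm_le: "\<And>t. t \<ge> 0 \<Longrightarrow> norm (P t) \<le> C"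
    and c_pos: "c > 0" and P_coercive: "\<And>t y. t \<ge> 0 \<Longrightarrow> c * (norm y)\<^sup>2 \<le> inner (P t y) y"
    and a1: "locally_integrable_nonneg a1" and a2: "locally_integrable_nonneg a2"
    and a1_div: "filterlim (\<lambda>t. integral {0..t} a1) at_top at_top"
    and M_nonneg: "M \<ge> 0" and a2_le: "\<And>t. t \<ge> 0 \<Longrightarrow> a2 t \<le> M * a1 t"
    and \<zeta>: "class_K \<zeta>" and \<theta>: "class_K \<theta>"
    and r_pos: "r > 0" and \<theta>_near_0: "\<And>s. 0 \<le> s \<Longrightarrow> s \<le> r \<Longrightarrow> \<theta> s \<le> s\<^sup>2 / (2 * (1 + M))"
    and dissipation: "\<And>t x u. t \<ge> 0 \<Longrightarrow> x \<in> D t \<Longrightarrow>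
        inner (P t x) (A t x) + inner (P t (A t x)) x + inner (P' t x) x
          + 2 * inner (F t x u) (P t x)
        \<le> - a1 t * (norm x)\<^sup>2 + a2 t * \<theta> (norm x) + \<zeta> (norm u)"
begin

lemma V_nonneg: "t \<ge> 0 \<Longrightarrow> inner (P t y) y \<ge> 0"
  using P_coercive[of t y] c_pos
  by (meson mult_nonneg_nonneg order_trans less_imp_le zero_le_power2)

lemma V_le: "t \<ge> 0 \<Longrightarrow> inner (P t y) y \<le> C * (norm y)\<^sup>2"
proof -
  assume "t \<ge> 0"
  have "inner (P t y) y \<le> norm (P t y) * norm y"
    by (rule norm_cauchy_schwarz)
  also have "\<dots> \<le> norm (P t) * norm y * norm y"
    by (intro mult_right_mono norm_blinfun) auto
  also have "\<dots> \<le> C * norm y * norm y"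
    using P_norm_le \<open>t \<ge> 0\<close> by (intro mult_right_mono) auto
  finally show ?thesis
    by (simp add: power2_eq_square mult.assoc)
qed

lemma V_bounds:
  "\<exists>\<alpha>1 \<alpha>2. class_Kinf \<alpha>1 \<and> class_Kinf \<alpha>2 \<and>
    (\<forall>t\<ge>0. \<forall>x. \<alpha>1 (norm x) \<le> inner (P t x) x \<and> inner (P t x) x \<le> \<alpha>2 (norm x))"
  using class_Kinf_scaled_square[OF c_pos] class_Kinf_scaled_square[OF C_pos] P_coercive V_le
  by blast

lemma C1_nonneg_V: "C1_nonneg_functional (\<lambda>t x. inner (P t x) x)"
  using P_deriv P'_cont P_sym V_nonneg by (rule C1_nonneg_functional_quadratic_form)

lemma V_derivative_along_solution:
  assumes sol: "classical_solution A D F u x0 x" and "t > 0"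
  obtains d where "((\<lambda>s. inner (P s (x s)) (x s)) has_real_derivative d) (at t)"
    and "d \<le> - a1 t * (norm (x t))\<^sup>2 + a2 t * \<theta> (norm (x t)) + \<zeta> (norm (u t))"
proof -
  let ?f = "F t (x t) (u t)"
  have dx: "(x has_vector_derivative A t (x t) + ?f) (at t)" and xD: "x t \<in> D t"
    using sol \<open>t > 0\<close> unfolding classical_solution_def by auto
  have "(P has_vector_derivative P' t) (at t within {0..})"
    using P_deriv \<open>t > 0\<close> by simp
  then have dP: "(P has_vector_derivative P' t) (at t)"
    using \<open>t > 0\<close> by (subst (asm) at_within_interior) auto
  have "inner (P t (x t)) ?f = inner ?f (P t (x t))"
    by (rule inner_commute)
  moreover have "inner (P t ?f) (x t) = inner ?f (P t (x t))"
    using P_sym \<open>t > 0\<close> by simp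
  ultimately have "inner (P t (x t)) (A t (x t) + ?f) + inner (P t (A t (x t) + ?f)) (x t)
      + inner (P' t (x t)) (x t)
    = inner (P t (x t)) (A t (x t)) + inner (P t (A t (x t))) (x t) + inner (P' t (x t)) (x t)
      + 2 * inner ?f (P t (x t))"
    by (simp add: inner_add_left inner_add_right blinfun.add_right)
  with has_real_derivative_quadratic_form[OF dP dx] dissipation[OF _ xD] \<open>t > 0\<close> show thesis
    by (intro that) auto
qed

text \<open>The factor \<open>1 + M\<close> is moved from \<open>g2\<close> into \<open>\<theta>2\<close>, so that \<open>g2 \<le> g1\<close> while
  \<open>g2 \<theta>2 = a2 \<theta>\<close>.\<close>
lemma LF_decay_V:
  "LF_decay A D F (\<lambda>t x. inner (P t x) x) a1 (\<lambda>t. a2 t / (1 + M))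
    (\<lambda>s. s\<^sup>2) (\<lambda>s. (1 + M) * \<theta> s) \<zeta>"
  unfolding LF_decay_def
proof (intro conjI allI impI)
  show "locally_integrable_nonneg (\<lambda>t. a2 t / (1 + M))"
    using a2 M_nonneg unfolding locally_integrable_nonneg_def by (auto intro: integrable_on_divide)
  show "a2 t / (1 + M) \<le> a1 t" if "t \<ge> 0" for t
    using a2_le[OF that] a1 M_nonneg that unfolding locally_integrable_nonneg_def
    by (auto simp: field_simps intro: order_trans[of _ "M * a1 t"])
  show "class_K (\<lambda>s. (1 + M) * \<theta> s)"
    using \<theta> M_nonneg unfolding class_K_def strict_mono_on_def
    by (auto intro: continuous_intros)
  have "(1 + M) * \<theta> s \<le> s\<^sup>2" if "0 \<le> s" "s \<le> r" for s
  proof -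
    have "(1 + M) * \<theta> s \<le> 2 * (1 + M) * \<theta> s"
      using class_K_nonneg[OF \<theta> \<open>0 \<le> s\<close>] M_nonneg by (intro mult_right_mono) auto
    also have "\<dots> \<le> s\<^sup>2"
      using \<theta>_near_0[OF that] M_nonneg by (simp add: field_simps)
    finally show ?thesis by simp
  qed
  with r_pos show "\<exists>R'>0. \<forall>s\<in>{0..R'}. (1 + M) * \<theta> s \<le> s\<^sup>2"
    by auto
  fix x0 u x and t :: real
  assume "classical_solution A D F u x0 x" and "t > 0"
  then obtain d where "((\<lambda>s. inner (P s (x s)) (x s)) has_real_derivative d) (at t)"
    and "d \<le> - a1 t * (norm (x t))\<^sup>2 + a2 t * \<theta> (norm (x t)) + \<zeta> (norm (u t))"
    by (rule V_derivative_along_solution)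
  with M_nonneg show "\<exists>d. ((\<lambda>s. inner (P s (x s)) (x s)) has_real_derivative d) (at t) \<and>
      d \<le> - a1 t * (norm (x t))\<^sup>2 + a2 t / (1 + M) * ((1 + M) * \<theta> (norm (x t)))
        + \<zeta> (norm (u t))"
    by auto
qed (use a1 a1_div \<zeta> class_K_square in auto)

lemma LF_decay_V_a2_zero:
  assumes "\<forall>t\<ge>0. a2 t = 0"
  shows "LF_decay A D F (\<lambda>t x. inner (P t x) x) a1 (\<lambda>_. 0) (\<lambda>s. s\<^sup>2) (\<lambda>s. s\<^sup>2) \<zeta>"
  unfolding LF_decay_def
proof (intro conjI allI impI)
  fix x0 u x and t :: real
  assume "classical_solution A D F u x0 x" and "t > 0"
  then obtain d where "((\<lambda>s. inner (P s (x s)) (x s)) has_real_derivative d) (at t)"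
    and "d \<le> - a1 t * (norm (x t))\<^sup>2 + a2 t * \<theta> (norm (x t)) + \<zeta> (norm (u t))"
    by (rule V_derivative_along_solution)
  with assms \<open>t > 0\<close> show "\<exists>d. ((\<lambda>s. inner (P s (x s)) (x s)) has_real_derivative d) (at t) \<and>
      d \<le> - a1 t * (norm (x t))\<^sup>2 + 0 * (norm (x t))\<^sup>2 + \<zeta> (norm (u t))"
    by auto
qed (use a1 a1_div \<zeta> class_K_square in
    \<open>auto simp: locally_integrable_nonneg_def intro: exI[of _ 1]\<close>)

theorem LiISS_LF_V: "LiISS_LF A D F (\<lambda>t x. inner (P t x) x)"
  unfolding LiISS_LF_def using C1_nonneg_V V_bounds LF_decay_V by blast

theorem iISS_LF_V_if_a2_zero: "(\<forall>t\<ge>0. a2 t = 0) \<Longrightarrow> iISS_LF A D F (\<lambda>t x. inner (P t x) x)"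
  unfolding iISS_LF_def using C1_nonneg_V V_bounds LF_decay_V_a2_zero by blast

lemma V_derivative_bound_near_0:
  assumes sol: "classical_solution A D F u x0 x" and "t > 0"
    and near_0: "(\<forall>t\<ge>0. a2 t = 0) \<or> norm (x t) \<le> r"
  obtains d where "((\<lambda>s. inner (P s (x s)) (x s)) has_real_derivative d) (at t)"
    and "d \<le> - (a1 t / (2 * C)) * inner (P t (x t)) (x t) + \<zeta> (norm (u t))"
proof -
  let ?n = "norm (x t)"
  obtain d where deriv: "((\<lambda>s. inner (P s (x s)) (x s)) has_real_derivative d) (at t)"
    and d: "d \<le> - a1 t * ?n\<^sup>2 + a2 t * \<theta> ?n + \<zeta> (norm (u t))"
    using V_derivative_along_solution[OF sol \<open>t > 0\<close>] .
  have a1_t: "a1 t \<ge> 0"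
    using a1 \<open>t > 0\<close> unfolding locally_integrable_nonneg_def by simp
  have "a2 t * \<theta> ?n \<le> a1 t * ?n\<^sup>2 / 2"
  proof (cases "\<forall>t\<ge>0. a2 t = 0")
    case False
    then have "?n \<le> r" using near_0 by blast
    have "a2 t * \<theta> ?n \<le> M * a1 t * \<theta> ?n"
      using a2_le \<open>t > 0\<close> class_K_nonneg[OF \<theta> norm_ge_zero] by (intro mult_right_mono) auto
    also have "\<dots> \<le> M * a1 t * (?n\<^sup>2 / (2 * (1 + M)))"
      using \<theta>_near_0[OF norm_ge_zero \<open>?n \<le> r\<close>] M_nonneg a1_t by (intro mult_left_mono) auto
    also have "\<dots> = M / (1 + M) * (a1 t * ?n\<^sup>2 / 2)"
      using M_nonneg by (simp add: field_simps)
    also have "\<dots> \<le> a1 t * ?n\<^sup>2 / 2"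
      using M_nonneg a1_t by (intro mult_left_le_one_le) auto
    finally show ?thesis .
  qed (use \<open>t > 0\<close> a1_t in simp)
  moreover have "a1 t * inner (P t (x t)) (x t) / (2 * C) \<le> a1 t * ?n\<^sup>2 / 2"
    using mult_left_mono[OF V_le a1_t] \<open>t > 0\<close> C_pos by (simp add: field_simps)
  ultimately show thesis
    using deriv d by (intro that) auto
qed

lemma continuous_on_input_cost:
  fixes u :: "real \<Rightarrow> 'u"
  assumes "continuous_on {0..} u"
  shows "continuous_on {0..} (\<lambda>s. \<zeta> (norm (u s)))"
  using \<zeta> assms unfolding class_K_def
  by (auto intro!: continuous_on_compose2[of "{0..}" \<zeta>] continuous_intros)

lemma locally_integrable_nonneg_input_cost:
  fixes u :: "real \<Rightarrow> 'u"
  assumes "continuous_on {0..} u"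
  shows "locally_integrable_nonneg (\<lambda>s. \<zeta> (norm (u s)))"
  using continuous_on_input_cost[OF assms] class_K_nonneg[OF \<zeta>]
  by (intro locally_integrable_nonneg_continuous) auto

lemma input_integral_nonneg:
  fixes u :: "real \<Rightarrow> 'u"
  assumes "continuous_on {0..} u"
  shows "integral {0..t} (\<lambda>s. \<zeta> (norm (u s))) \<ge> 0"
  using locally_integrable_nonneg_input_cost[OF assms]
  by (rule locally_integrable_nonneg_integral_nonneg)

definition decay_integral :: "real \<Rightarrow> real" where
  "decay_integral t = integral {0..t} a1 / (2 * C)"

lemma decay_integral_nonneg: "decay_integral t \<ge> 0"
  using locally_integrable_nonneg_integral_nonneg[OF a1] C_pos by (simp add: decay_integral_def)

lemma V_solution_bound:
  assumes sol: "classical_solution A D F u x0 x" and u: "continuous_on {0..} u" and "t \<ge> 0"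
    and near_0: "\<And>s. 0 < s \<Longrightarrow> s < t \<Longrightarrow> (\<forall>t\<ge>0. a2 t = 0) \<or> norm (x s) \<le> r"
  shows "inner (P t (x t)) (x t)
    \<le> inner (P 0 x0) x0 / (1 + decay_integral t) + integral {0..t} (\<lambda>s. \<zeta> (norm (u s)))"
proof -
  have x0: "x 0 = x0" and x_cont: "continuous_on {0..} x"
    using sol unfolding classical_solution_def by auto
  have P_cont: "continuous_on {0..} P"
    using P_deriv by (intro continuous_on_vector_derivative) auto
  have cost: "locally_integrable_nonneg (\<lambda>s. \<zeta> (norm (u s)))"
    using u by (rule locally_integrable_nonneg_input_cost)
  have "inner (P t (x t)) (x t)
      \<le> inner (P 0 (x 0)) (x 0) / (1 + integral {0..t} (\<lambda>s. a1 s / (2 * C)))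
        + integral {0..t} (\<lambda>s. \<zeta> (norm (u s)))"
  proof (rule comparison_decay_bound[where w' = "\<lambda>s. \<zeta> (norm (u s))"])
    show "continuous_on {0..t} (\<lambda>s. inner (P s (x s)) (x s))"
      using P_cont x_cont by (auto intro!: continuous_intros elim: continuous_on_subset)
    show "continuous_on {0..t} (\<lambda>s. integral {0..s} (\<lambda>s. \<zeta> (norm (u s))))"
      using locally_integrable_nonneg_integral_continuous[OF cost]
      by (auto elim: continuous_on_subset)
    show "((\<lambda>s. integral {0..s} (\<lambda>s. \<zeta> (norm (u s)))) has_real_derivative \<zeta> (norm (u s))) (at s)"
      if "s \<in> {0<..<t}" for s
      using that by (intro integral_has_real_derivative_at continuous_on_input_cost[OF u]) auto
    show "\<exists>d. ((\<lambda>s. inner (P s (x s)) (x s)) has_real_derivative d) (at s)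
        \<and> d \<le> - (a1 s / (2 * C)) * inner (P s (x s)) (x s) + \<zeta> (norm (u s))"
      if "s \<in> {0<..<t}" for s
      using that near_0[of s] by (auto elim!: V_derivative_bound_near_0[OF sol])
    show "a1 s / (2 * C) \<ge> 0" if "s \<in> {0..t}" for s
      using a1 C_pos that unfolding locally_integrable_nonneg_def by simp
    show "(\<lambda>s. a1 s / (2 * C)) integrable_on {0..t}"
      using a1 \<open>t \<ge> 0\<close> unfolding locally_integrable_nonneg_def by (auto intro: integrable_on_divide)
  qed (use \<open>t \<ge> 0\<close> V_nonneg locally_integrable_nonneg_integral_nonneg[OF cost] in auto)
  then show ?thesis
    by (simp add: x0 decay_integral_def integral_divide)
qed

definition transient_bound :: "real \<Rightarrow> real \<Rightarrow> real" where
  "transient_bound \<rho> t = sqrt (C / c) * \<rho> / sqrt (1 + decay_integral t)"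

lemma class_KL_transient_bound: "class_KL transient_bound"
proof -
  have "continuous_on {0..} decay_integral"
    unfolding decay_integral_def
    using C_pos
    by (intro continuous_intros locally_integrable_nonneg_integral_continuous[OF a1]) simp
  moreover have "mono decay_integral"
    using locally_integrable_nonneg_integral_mono[OF a1] C_pos
    unfolding decay_integral_def mono_def by (auto intro: divide_right_mono)
  moreover have "filterlim decay_integral at_top at_top"
    using filterlim_tendsto_pos_mult_at_top[OF tendsto_const _ a1_div, of "1 / (2 * C)"] C_pos
    unfolding decay_integral_def by simp
  ultimately show ?thesis
    using class_KL_divide_sqrt[of "sqrt (C / c)" decay_integral] c_pos C_pos decay_integral_nonneg
    unfolding transient_bound_def[abs_def] by simp
qed

lemma solution_norm_bound:
  assumes sol: "classical_solution A D F u x0 x" and u: "continuous_on {0..} u" and "t \<ge> 0"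
    and near_0: "\<And>s. 0 < s \<Longrightarrow> s < t \<Longrightarrow> (\<forall>t\<ge>0. a2 t = 0) \<or> norm (x s) \<le> r"
  shows "norm (x t) \<le> transient_bound (norm x0) t + sqrt (integral {0..t} (\<lambda>s. \<zeta> (norm (u s))) / c)"
  unfolding transient_bound_def
proof (rule norm_le_of_quadratic_bounds[OF c_pos C_pos _ _ norm_ge_zero norm_ge_zero])
  show "1 \<le> 1 + decay_integral t"
    using decay_integral_nonneg by simp
  show "0 \<le> integral {0..t} (\<lambda>s. \<zeta> (norm (u s)))"
    using u by (rule input_integral_nonneg)
qed (use P_coercive V_le V_solution_bound[OF assms] \<open>t \<ge> 0\<close> in auto)

text \<open>While the solution stays in the ball of radius \<open>r\<close>, its energy obeys
  \<open>V \<le> C \<parallel>x0\<parallel>\<^sup>2 + \<integral>\<zeta>(\<parallel>u\<parallel>) \<le> (C + 1) R \<le> c r\<^sup>2 / 2\<close> (as \<open>R \<le> 1\<close>), so by coercivity the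
  solution never reaches the sphere of radius \<open>r\<close>.\<close>
definition LiISS_radius :: real where
  "LiISS_radius = min 1 (min (r / 2) (c * r\<^sup>2 / (2 * (C + 1))))"

lemma LiISS_radius_pos: "LiISS_radius > 0"
  using r_pos c_pos C_pos by (simp add: LiISS_radius_def)

lemma V_le_while_near_0:
  assumes sol: "classical_solution A D F u x0 x" and u: "continuous_on {0..} u"
    and small: "\<And>t. t > 0 \<Longrightarrow> norm x0 + integral {0..t} (\<lambda>s. \<zeta> (norm (u s))) \<le> LiISS_radius"
    and "T > 0" and near_0: "\<And>s. 0 < s \<Longrightarrow> s < T \<Longrightarrow> norm (x s) \<le> r"
  shows "inner (P T (x T)) (x T) \<le> c * r\<^sup>2 / 2"
proof -
  let ?R = LiISS_radius and ?w = "integral {0..T} (\<lambda>s. \<zeta> (norm (u s)))"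
  have "norm x0 \<le> 1"
    using small[of 1] input_integral_nonneg[OF u, of 1] by (simp add: LiISS_radius_def)
  then have "(norm x0)\<^sup>2 \<le> norm x0"
    by (simp add: power2_eq_square mult_left_le_one_le)
  also have "norm x0 \<le> ?R"
    using small[of 1] input_integral_nonneg[OF u, of 1] by simp
  finally have x0_sq: "(norm x0)\<^sup>2 \<le> ?R" .
  have "inner (P T (x T)) (x T) \<le> inner (P 0 x0) x0 / (1 + decay_integral T) + ?w"
    using near_0 \<open>T > 0\<close> by (intro V_solution_bound[OF sol u]) auto
  also have "inner (P 0 x0) x0 / (1 + decay_integral T) \<le> inner (P 0 x0) x0"
    using V_nonneg[of 0 x0] decay_integral_nonneg[of T]
    by (simp add: divide_le_eq mult_le_cancel_left1)
  also have "\<dots> \<le> C * ?R"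
    using order_trans[OF V_le mult_left_mono[OF x0_sq]] C_pos by simp
  also have "?w \<le> ?R"
    using small[OF \<open>T > 0\<close>] norm_ge_zero[of x0] by linarith
  also have "C * ?R + ?R \<le> c * r\<^sup>2 / 2"
  proof -
    have "?R \<le> c * r\<^sup>2 / (2 * (C + 1))"
      unfolding LiISS_radius_def by simp
    then show ?thesis
      using C_pos LiISS_radius_pos by (simp add: field_simps)
  qed
  finally show ?thesis
    by simp
qed

lemma solution_stays_near_0:
  assumes sol: "classical_solution A D F u x0 x" and u: "continuous_on {0..} u"
    and small: "\<And>t. t > 0 \<Longrightarrow> norm x0 + integral {0..t} (\<lambda>s. \<zeta> (norm (u s))) \<le> LiISS_radius"
    and "s \<ge> 0"
  shows "norm (x s) < r"
proof (rule continuous_stays_below[where f = "\<lambda>s. norm (x s)", OF _ _ _ \<open>s \<ge> 0\<close>])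
  have x0: "x 0 = x0" and x_cont: "continuous_on {0..} x"
    using sol unfolding classical_solution_def by auto
  then show "continuous_on {0..} (\<lambda>s. norm (x s))"
    by (intro continuous_intros)
  have "norm x0 \<le> LiISS_radius"
    using small[of 1] input_integral_nonneg[OF u, of 1] by simp
  then show "norm (x 0) < r"
    using x0 r_pos by (simp add: LiISS_radius_def)
  fix T :: real
  assume "T > 0" and "\<And>s. 0 < s \<Longrightarrow> s < T \<Longrightarrow> norm (x s) \<le> r"
  then have "c * (norm (x T))\<^sup>2 \<le> c * r\<^sup>2 / 2"
    using V_le_while_near_0[OF sol u small] P_coercive[of T "x T"] by fastforce
  also have "\<dots> < c * r\<^sup>2"
    using c_pos r_pos by simp
  finally show "norm (x T) < r"
    using c_pos r_pos by (simp add: power_less_imp_less_base)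
qed

theorem system_LiISS: "LiISS A D F"
  unfolding LiISS_def
proof (intro exI conjI allI impI)
  show "LiISS_radius > 0"
    by (rule LiISS_radius_pos)
  show "class_K \<zeta>" by (rule \<zeta>)
  show "class_K \<zeta>" by (rule \<zeta>)
  show "class_Kinf (\<lambda>s. s)" by (rule class_Kinf_ident)
  show "class_Kinf (\<lambda>w. sqrt (w / c))" by (rule class_Kinf_sqrt_divide[OF c_pos])
  show "class_KL transient_bound" by (rule class_KL_transient_bound)
  fix x0 u x and t :: real
  assume "classical_solution A D F u x0 x" and "continuous_on {0..} u" and "t \<ge> 0"
    and "\<forall>t>0. norm x0 + integral {0..t} (\<lambda>s. \<zeta> (norm (u s))) \<le> LiISS_radius"
  then show "norm (x t)
      \<le> transient_bound (norm x0) t + sqrt (integral {0..t} (\<lambda>s. \<zeta> (norm (u s))) / c)"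
    by (blast intro: solution_norm_bound less_imp_le solution_stays_near_0)
qed

theorem system_iISS_if_a2_zero:
  assumes "\<forall>t\<ge>0. a2 t = 0"
  shows "iISS A D F"
  unfolding iISS_def
proof (intro exI conjI allI impI)
  show "class_K \<zeta>" by (rule \<zeta>)
  show "class_Kinf (\<lambda>w. sqrt (w / c))" by (rule class_Kinf_sqrt_divide[OF c_pos])
  show "class_KL transient_bound" by (rule class_KL_transient_bound)
  fix x0 u x and t :: real
  assume "classical_solution A D F u x0 x" and "continuous_on {0..} u" and "t \<ge> 0"
  then show "norm (x t)
      \<le> transient_bound (norm x0) t + sqrt (integral {0..t} (\<lambda>s. \<zeta> (norm (u s))) / c)"
    using assms by (blast intro: solution_norm_bound)
qed

end

theorem theorem3p5:
  fixes A :: "real \<Rightarrow> 'x::{real_inner, complete_space} \<Rightarrow> 'x"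
    and D :: "real \<Rightarrow> 'x set"
    and F :: "real \<Rightarrow> 'x \<Rightarrow> 'u::real_normed_vector \<Rightarrow> 'x"
    and P P' :: "real \<Rightarrow> 'x \<Rightarrow>\<^sub>L 'x"
    and a1 a2 :: "real \<Rightarrow> real"
    and M m1 m2 :: real
    and \<zeta> :: "real \<Rightarrow> real"
  assumes gen: "\<forall>t\<ge>0. generates_analytic_semigroup (A t) (D t)"
    and P_deriv: "\<forall>t\<ge>0. (P has_vector_derivative P' t) (at t within {0..})"
    and P'_cont: "continuous_on {0..} P'"
    and P_bounded: "\<exists>c. \<forall>t\<ge>0. norm (P t) \<le> c"
    and P_coercive: "\<exists>c>0. \<forall>t\<ge>0. \<forall>x. inner (P t x) x \<ge> c * (norm x)\<^sup>2"
    and P_posdef: "\<forall>t\<ge>0. positive_definite_op (P t)"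
    and a1: "locally_integrable_nonneg a1"
    and a2: "locally_integrable_nonneg a2"
    and a1_div: "filterlim (\<lambda>t. integral {0..t} a1) at_top at_top"
    and M: "M \<ge> 0" and a2_le: "\<forall>t\<ge>0. a2 t \<le> M * a1 t"
    and m1: "m1 > 2" and m2: "m2 > 2"
    and \<zeta>: "class_K \<zeta>"
    and ineq: "\<forall>t\<ge>0. \<forall>x\<in>D t. \<forall>u.
        inner (P t x) (A t x) + inner (P t (A t x)) x + inner (P' t x) x
          + 2 * inner (F t x u) (P t x)
        \<le> - a1 t * (norm x)\<^sup>2 + a2 t * (norm x powr m1 + norm x powr m2) + \<zeta> (norm u)"
  shows "LiISS_LF A D F (\<lambda>t x. inner (P t x) x) \<and> LiISS A D F
     \<and> ((\<forall>t\<ge>0. a2 t = 0) \<longrightarrow> iISS_LF A D F (\<lambda>t x. inner (P t x) x) \<and> iISS A D F)"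
proof -
  \<comment> \<open>\<open>gen\<close> only ensures that classical solutions exist; all notions in the conclusion
    quantify over given classical solutions.\<close>
  obtain C where C: "\<forall>t\<ge>0. norm (P t) \<le> C"
    using P_bounded by blast
  obtain c where "c > 0" and c: "\<forall>t\<ge>0. \<forall>x. c * (norm x)\<^sup>2 \<le> inner (P t x) x"
    using P_coercive by blast
  obtain r where "r > 0"
    and r: "\<And>s. 0 \<le> s \<Longrightarrow> s \<le> r \<Longrightarrow> s powr m1 + s powr m2 \<le> 1 / (2 * (1 + M)) * s\<^sup>2"
    using powr_add_le_square_near_0[OF m1 m2, of "1 / (2 * (1 + M))"] M by auto
  interpret quadratic_Lyapunov A D F P P' a1 a2 \<zeta> "\<lambda>s. s powr m1 + s powr m2" M c "max C 1" r
  proof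
    show "class_K (\<lambda>s. s powr m1 + s powr m2)"
      using m1 m2 by (intro class_K_powr_add) auto
    show "inner (P t y) z = inner y (P t z)" if "t \<ge> 0" for t y z
      using P_posdef that by (simp add: positive_definite_op_def)
    show "s powr m1 + s powr m2 \<le> s\<^sup>2 / (2 * (1 + M))" if "0 \<le> s" "s \<le> r" for s
      using r[OF that] by simp
  qed (use P_deriv P'_cont C c a1 a2 a1_div M a2_le \<zeta> ineq \<open>c > 0\<close> \<open>r > 0\<close> in
      \<open>auto intro: max.coboundedI1\<close>)
  show ?thesis
    using LiISS_LF_V system_LiISS iISS_LF_V_if_a2_zero system_iISS_if_a2_zero by blast
qed

end
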